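(* In the setting described in the context, $V$ is an irreducible $\mathcal U$-module on which the generators act as follows: $y^+_0$ acts as $a^{-1}A$, $y^+_1$ as $a^{*-1}A^*$, $y^-_0$ as $b^{*-1}B^*$, $y^-_1$ as $b^{-1}B$, $k_0$ as $K^*$, $k_1$ as $K^{*-1}$, $k_0^{-1}$ as $K^{*-1}$, and $k_1^{-1}$ as $K^*$.
   Context: $\mathbb K$ is an algebraically closed field, $q\in\mathbb K$ nonzero and not a root of unity, $[3]_q=\frac{q^3-q^{-3}}{q-q^{-1}}$, $V$ a nonzero finite-dimensional $\mathbb K$-vector space. $\mathcal U$ (isomorphic to $U_q(\widehat{sl}_2)$) is the unital associative $\mathbb K$-algebra with generators $y^{\pm}_i,k_i^{\pm1}$ ($i\in\{0,1\}$) and relations: $k_ik_i^{-1}=k_i^{-1}k_i=1$; $k_0k_1$ central; $\frac{qy^+_ik_i-q^{-1}k_iy^+_i}{q-q^{-1}}=1$; $\frac{qk_iy^-_i-q^{-1}y^-_ik_i}{q-q^{-1}}=1$; $\frac{qy^-_iy^+_i-q^{-1}y^+_iy^-_i}{q-q^{-1}}=1$; $\frac{qy^+_iy^-_j-q^{-1}y^-_jy^+_i}{q-q^{-1}}=k_0^{-1}k_1^{-1}$ ($i\ne j$); $(y^{\pm}_i)^3y^{\pm}_j-[3]_q(y^{\pm}_i)^2y^{\pm}_jy^{\pm}_i+[3]_qy^{\pm}_iy^{\pm}_j(y^{\pm}_i)^2-y^{\pm}_j(y^{\pm}_i)^3=0$ ($i\ne j$). A tridiagonal pair on $V$ is an ordered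 pair $A,A^*$ of linear maps $V\to V$ such that: (i) each is diagonalizable; (ii) there is an ordering $V_0,\dots,V_d$ of the eigenspaces of $A$ with $A^*V_i\subseteq V_{i-1}+V_i+V_{i+1}$ ($V_{-1}=V_{d+1}=0$); (iii) there is an ordering $V^*_0,\dots,V^*_\delta$ of the eigenspaces of $A^*$ with $AV^*_i\subseteq V^*_{i-1}+V^*_i+V^*_{i+1}$ ($V^*_{-1}=V^*_{\delta+1}=0$); (iv) no subspace $W\ne0,V$ satisfies $AW\subseteq W$, $A^*W\subseteq W$. It is known $d=\delta$; orderings as in (ii),(iii) are called standard. Setting: $A,A^*$ is a tridiagonal pair on $V$; $V_0,\dots,V_d$ (resp. $V^*_0,\dots,V^*_d$) is a standard ordering of the eigenspaces of $A$ (resp. $A^*$); the eigenvalue of $A$ on $V_i$ is $aq^{2i-d}$ and that of $A^*$ on $V^*_i$ is $a^*q^{d-2i}$ for nonzero $a,a^*\in\mathbb K$; $b,b^*\in\mathbb K$ nonzero. For $0\le i\le d$, each of the families $(V^*_0+\cdots+V^*_i)\cap(V_0+\cdots+V_{d-i})$, $(V^*_{d-i}+\cdots+V^*_d)\cap(V_i+\cdots+V_d)$, $(V^*_{d-i}+\cdots+V^*_d)\cap(V_0+\cdots+V_{d-i})$ is a decomposition of $V$ (nonzero subspaces, direct sum equal to $V$). $B$ acts as $bq^{2i-d}I$ on $(V^*_0+\cdots+V^*_i)\cap(V_0+\cdots+V_{d-i})$; $B^*$ acts as $b^*q^{d-2i}I$ on $(V^*_{d-i}+\cdots+V^*_d)\cap(V_i+\cdots+V_d)$;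 $K^*$ acts as $q^{2i-d}I$ on $(V^*_{d-i}+\cdots+V^*_d)\cap(V_0+\cdots+V_{d-i})$. *)

theory Defs
  imports "HOL-Analysis.Analysis" "HOL-Computational_Algebra.Polynomial"
begin

(* V is modelled as 'k^'n (any nonzero finite-dimensional K-space is of this form,
   'n a finite nonempty index type); linear maps V -> V are matrices 'k^'n^'n
   acting by matrix-vector product. *)

definition eigenspace :: "'k::field^'n^'n \<Rightarrow> 'k \<Rightarrow> ('k^'n) set" where
  "eigenspace M \<theta> = {v. M *v v = \<theta> *s v}"

definition is_eigenvalue :: "'k::field^'n^'n \<Rightarrow> 'k \<Rightarrow> bool" where
  "is_eigenvalue M \<theta> \<longleftrightarrow> eigenspace M \<theta> \<noteq> {0}"

definition diagonalizable :: "'k::field^'n^'n \<Rightarrow> bool" where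
  "diagonalizable M \<longleftrightarrow> vec.span (\<Union>\<theta>. eigenspace M \<theta>) = UNIV"

definition ssum :: "(nat \<Rightarrow> ('k::field^'n) set) \<Rightarrow> nat set \<Rightarrow> ('k^'n) set" where
  "ssum W I = vec.span (\<Union>i\<in>I. W i)"

definition eigenspace_ordering :: "'k::field^'n^'n \<Rightarrow> (nat \<Rightarrow> ('k^'n) set) \<Rightarrow> nat \<Rightarrow> bool" where
  "eigenspace_ordering M W d \<longleftrightarrow>
     (\<exists>\<theta>::nat \<Rightarrow> 'k. inj_on \<theta> {0..d} \<and> {t. is_eigenvalue M t} = \<theta> ` {0..d}
        \<and> (\<forall>i\<le>d. W i = eigenspace M (\<theta> i)))"

(* condition (ii)/(iii): N W_i \<subseteq> W_{i-1} + W_i + W_{i+1}, with W_{-1} = W_{d+1} = 0 *)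
definition tridiag_ordering :: "'k::field^'n^'n \<Rightarrow> (nat \<Rightarrow> ('k^'n) set) \<Rightarrow> nat \<Rightarrow> bool" where
  "tridiag_ordering N W d \<longleftrightarrow>
     (\<forall>i\<le>d. (\<lambda>v. N *v v) ` W i \<subseteq> ssum W ({i - 1, i, i + 1} \<inter> {0..d}))"

definition tridiagonal_pair :: "'k::field^'n^'n \<Rightarrow> 'k^'n^'n \<Rightarrow> bool" where
  "tridiagonal_pair A As \<longleftrightarrow>
     diagonalizable A \<and> diagonalizable As \<and>
     (\<exists>W d. eigenspace_ordering A W d \<and> tridiag_ordering As W d) \<and>
     (\<exists>W d. eigenspace_ordering As W d \<and> tridiag_ordering A W d) \<and>
     (\<forall>U. vec.subspace U \<and> (\<lambda>v. A *v v) ` U \<subseteq> U \<and> (\<lambda>v. As *v v) ` U \<subseteq> U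
          \<longrightarrow> U = {0} \<or> U = UNIV)"

definition decomposition :: "(nat \<Rightarrow> ('k::field^'n) set) \<Rightarrow> nat \<Rightarrow> bool" where
  "decomposition W d \<longleftrightarrow>
     (\<forall>i\<le>d. vec.subspace (W i) \<and> W i \<noteq> {0}) \<and>
     (\<forall>v. \<exists>w. (\<forall>i\<le>d. w i \<in> W i) \<and> v = (\<Sum>i\<le>d. w i)) \<and>
     (\<forall>w. (\<forall>i\<le>d. w i \<in> W i) \<and> (\<Sum>i\<le>d. w i) = 0 \<longrightarrow> (\<forall>i\<le>d. w i = 0))"

definition qint3 :: "'k::field \<Rightarrow> 'k" where
  "qint3 q = (q ^ 3 - inverse q ^ 3) / (q - inverse q)"

(* The defining relations of U, for the images Y0p = y^+_0, Y1p = y^+_1,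
   Y0m = y^-_0, Y1m = y^-_1, K0 = k_0, K1 = k_1, K0i = k_0^{-1}, K1i = k_1^{-1}. *)
definition U_relations ::
  "'k::field \<Rightarrow> 'k^'n^'n \<Rightarrow> 'k^'n^'n \<Rightarrow> 'k^'n^'n \<Rightarrow> 'k^'n^'n
     \<Rightarrow> 'k^'n^'n \<Rightarrow> 'k^'n^'n \<Rightarrow> 'k^'n^'n \<Rightarrow> 'k^'n^'n \<Rightarrow> bool" where
  "U_relations q Y0p Y1p Y0m Y1m K0 K1 K0i K1i \<longleftrightarrow>
    (let yp = (\<lambda>i::nat. if i = 0 then Y0p else Y1p);
         ym = (\<lambda>i::nat. if i = 0 then Y0m else Y1m);
         k  = (\<lambda>i::nat. if i = 0 then K0 else K1);
         ki = (\<lambda>i::nat. if i = 0 then K0i else K1i);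
         I = mat 1 :: 'k^'n^'n;
         c = inverse (q - inverse q);
         gens = {Y0p, Y1p, Y0m, Y1m, K0, K1, K0i, K1i}
     in (\<forall>i\<in>{0,1}. k i ** ki i = I \<and> ki i ** k i = I)
      \<and> (\<forall>X\<in>gens. (K0 ** K1) ** X = X ** (K0 ** K1))
      \<and> (\<forall>i\<in>{0,1}. mat c ** (mat q ** (yp i ** k i) - mat (inverse q) ** (k i ** yp i)) = I)
      \<and> (\<forall>i\<in>{0,1}. mat c ** (mat q ** (k i ** ym i) - mat (inverse q) ** (ym i ** k i)) = I)
      \<and> (\<forall>i\<in>{0,1}. mat c ** (mat q ** (ym i ** yp i) - mat (inverse q) ** (yp i ** ym i)) = I)
      \<and> (\<forall>i\<in>{0,1}. \<forall>j\<in>{0,1}. i \<noteq> j \<longrightarrow>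
            mat c ** (mat q ** (yp i ** ym j) - mat (inverse q) ** (ym j ** yp i)) = K0i ** K1i)
      \<and> (\<forall>y\<in>{yp, ym}. \<forall>i\<in>{0,1}. \<forall>j\<in>{0,1}. i \<noteq> j \<longrightarrow>
            y i ** y i ** y i ** y j - mat (qint3 q) ** (y i ** y i ** y j ** y i)
            + mat (qint3 q) ** (y i ** y j ** y i ** y i) - y j ** y i ** y i ** y i = 0))"

(* A U-module is irreducible iff no subspace other than 0 and V is invariant
   under all generators (the generators generate U as an algebra). *)
definition U_irreducible ::
  "'k^'n^'n \<Rightarrow> 'k^'n^'n \<Rightarrow> 'k^'n^'n \<Rightarrow> 'k^'n^'n
     \<Rightarrow> 'k^'n^'n \<Rightarrow> 'k^'n^'n \<Rightarrow> 'k^'n^'n \<Rightarrow> 'k::field^'n^'n \<Rightarrow> bool" where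
  "U_irreducible Y0p Y1p Y0m Y1m K0 K1 K0i K1i \<longleftrightarrow>
     (\<forall>U. vec.subspace U \<and> (\<forall>X\<in>{Y0p, Y1p, Y0m, Y1m, K0, K1, K0i, K1i}. (\<lambda>v. X *v v) ` U \<subseteq> U)
          \<longrightarrow> U = {0} \<or> U = UNIV)"

definition irreducible_U_module ::
  "'k::field \<Rightarrow> 'k^'n^'n \<Rightarrow> 'k^'n^'n \<Rightarrow> 'k^'n^'n \<Rightarrow> 'k^'n^'n
     \<Rightarrow> 'k^'n^'n \<Rightarrow> 'k^'n^'n \<Rightarrow> 'k^'n^'n \<Rightarrow> 'k^'n^'n \<Rightarrow> bool" where
  "irreducible_U_module q Y0p Y1p Y0m Y1m K0 K1 K0i K1i \<longleftrightarrow>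
     U_relations q Y0p Y1p Y0m Y1m K0 K1 K0i K1i \<and> U_irreducible Y0p Y1p Y0m Y1m K0 K1 K0i K1i"

end

theory Submission
  imports Defs
begin

(* Write X0 = A/a, X1 = A*/a*, Z0 = B*/b*, Z1 = B/b. Each of X0, X1, Z1, Z0 and K* is
   diagonal, with eigenvalues q^(2i-d) or q^(d-2i), on one of five decompositions of V: the
   eigenspaces V_i, V*_i and the three intersections of flags from the hypotheses. A relation
   (q P Q - q^-1 Q P)/(q - q^-1) = 1 can be checked on these eigenvectors: it holds as soon as,
   for every eigenvector v of Q for the eigenvalue t, P v - t^-1 v is an eigenvector of Q for
   q^2 t. The flags V_0 + ... + V_j, V_j + ... + V_d, V*_0 + ... + V*_j, V*_j + ... + V*_d
   provide this: X0 and X1 move them by one step by tridiagonality, and subtracting the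
   eigenvalue pushes a vector one step down its own flag, so P v - t^-1 v lands in the
   neighbouring component of the decomposition. Conversely, a relation already proved forces
   P to move the eigenspaces of Q by one step, which gives the flag inclusions needed by the
   later relations. The q-Serre relations hold because on an eigenvector v of X for t the Serre
   expression is (X - t)(X - q^2 t)(X - q^-2 t) applied to Y v, and Y v only has components in
   the three neighbouring eigenspaces. Irreducibility is inherited from the tridiagonal pair. *)

section \<open>Sums of subspaces and decompositions\<close>

lemma mat_matrix_vector_mult: "(mat c :: 'k::field^'n^'n) *v x = c *s x"
proof -
  have "(\<Sum>j\<in>UNIV. (if i = j then c else 0) * x $ j) = c * x $ i" for i
    by (simp add: if_distrib[of "\<lambda>t. t * _"] cong: if_cong)
  then show ?thesis by (simp add: vec_eq_iff matrix_vector_mult_def mat_def)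
qed

lemma mat_mult_matrix_vector_mult: "(mat c ** M) *v x = c *s (M *v x)" for M :: "'k::field^'n^'n"
  by (simp flip: matrix_vector_mul_assoc add: mat_matrix_vector_mult)

lemma ssum_subspace: "vec.subspace (ssum W I)"
  by (simp add: ssum_def vec.subspace_span)

lemma ssum_empty [simp]: "ssum W {} = {0}"
  by (simp add: ssum_def)

lemma ssum_mono: "I \<subseteq> J \<Longrightarrow> ssum W I \<subseteq> ssum W J"
  unfolding ssum_def by (intro vec.span_mono) blast

lemma ssum_base: "i \<in> I \<Longrightarrow> v \<in> W i \<Longrightarrow> v \<in> ssum W I"
  unfolding ssum_def by (rule vec.span_base) blast

lemma ssum_least: "vec.subspace T \<Longrightarrow> (\<And>i. i \<in> I \<Longrightarrow> W i \<subseteq> T) \<Longrightarrow> ssum W I \<subseteq> T"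
  unfolding ssum_def by (rule vec.span_minimal[rotated]) blast+

lemma ssum_image_subset:
  assumes "\<And>i v. i \<in> I \<Longrightarrow> v \<in> W i \<Longrightarrow> M *v v \<in> T"
    and "vec.subspace T" and "x \<in> ssum W I"
  shows "M *v x \<in> T"
proof -
  have "vec.subspace {x. M *v x \<in> T}"
    using assms(2) unfolding vec.subspace_def
    by (simp add: matrix_vector_right_distrib vector_scalar_commute)
  then have "ssum W I \<subseteq> {x. M *v x \<in> T}"
    unfolding ssum_def by (rule vec.span_minimal[rotated]) (use assms(1) in auto)
  then show ?thesis using assms(3) by auto
qed

lemma matrix_eq_on_span:
  fixes M N :: "'k::field^'n^'n"
  assumes "vec.span S = UNIV" and "\<And>v. v \<in> S \<Longrightarrow> M *v v = N *v v"
  shows "M = N"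
proof -
  have "vec.subspace {x. (M - N) *v x = 0}"
    unfolding vec.subspace_def by (simp add: matrix_vector_right_distrib vector_scalar_commute)
  then have "vec.span S \<subseteq> {x. (M - N) *v x = 0}"
    by (rule vec.span_minimal[rotated]) (use assms(2) in \<open>auto simp: matrix_vector_mult_diff_rdistrib\<close>)
  then show ?thesis
    using assms(1) by (auto simp: matrix_eq matrix_vector_mult_diff_rdistrib)
qed

lemma ssum_diag_minus:
  fixes D :: "'k::field^'n^'n"
  assumes "\<And>k v. k \<in> I \<Longrightarrow> v \<in> E k \<Longrightarrow> D *v v = f k *s v" and "x \<in> ssum E I"
  shows "D *v x - f j *s x \<in> ssum E (I - {j})"
proof -
  have "(D - mat (f j)) *v x \<in> ssum E (I - {j})"
  proof (rule ssum_image_subset[OF _ ssum_subspace assms(2)])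
    fix k v assume k: "k \<in> I" and v: "v \<in> E k"
    have "(D - mat (f j)) *v v = (f k - f j) *s v"
      using assms(1)[OF k v] by (simp add: matrix_vector_mult_diff_rdistrib mat_matrix_vector_mult
          vector_sub_rdistrib)
    moreover have "(f k - f j) *s v \<in> ssum E (I - {j})"
    proof (cases "k = j")
      case True
      then show ?thesis by (simp add: vec.subspace_0[OF ssum_subspace])
    next
      case False
      then show ?thesis using k v by (intro vec.subspace_scale[OF ssum_subspace] ssum_base) auto
    qed
    ultimately show "(D - mat (f j)) *v v \<in> ssum E (I - {j})" by simp
  qed
  then show ?thesis by (simp add: matrix_vector_mult_diff_rdistrib mat_matrix_vector_mult)
qed

lemma ssum_interval_diag_minus_top:
  fixes D :: "'k::field^'n^'n"
  assumes "\<And>k v. k \<in> {i..j} \<Longrightarrow> v \<in> E k \<Longrightarrow> D *v v = f k *s v" and "x \<in> ssum E {i..j}"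
  shows "D *v x - f j *s x \<in> ssum E {i..<j}"
proof -
  have "{i..j} - {j} = {i..<j}" by auto
  then show ?thesis using ssum_diag_minus[where j = j, OF assms] by simp
qed

lemma ssum_interval_diag_minus_bottom:
  fixes D :: "'k::field^'n^'n"
  assumes "\<And>k v. k \<in> {i..j} \<Longrightarrow> v \<in> E k \<Longrightarrow> D *v v = f k *s v" and "x \<in> ssum E {i..j}"
  shows "D *v x - f i *s x \<in> ssum E {i<..j}"
proof -
  have "{i..j} - {i} = {i<..j}" by auto
  then show ?thesis using ssum_diag_minus[where j = i, OF assms] by simp
qed

lemma tridiag_ordering_ssum:
  assumes "tridiag_ordering T E d" and "I \<subseteq> {0..d}"
    and "\<And>k. k \<in> I \<Longrightarrow> {k - 1, k, k + 1} \<inter> {0..d} \<subseteq> J" and "x \<in> ssum E I"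
  shows "T *v x \<in> ssum E J"
proof (rule ssum_image_subset[OF _ ssum_subspace assms(4)])
  fix k v assume k: "k \<in> I" and v: "v \<in> E k"
  have "k \<le> d" using k assms(2) by auto
  then have "(\<lambda>v. T *v v) ` E k \<subseteq> ssum E ({k - 1, k, k + 1} \<inter> {0..d})"
    using assms(1) unfolding tridiag_ordering_def by blast
  then show "T *v v \<in> ssum E J" using v ssum_mono[OF assms(3)[OF k]] by blast
qed

lemma decomposition_subspace: "decomposition Z d \<Longrightarrow> i \<le> d \<Longrightarrow> vec.subspace (Z i)"
  unfolding decomposition_def by simp

lemma decomposition_components_eq_0:
  assumes dec: "decomposition Z d" and S: "S \<subseteq> {..d}" and w: "\<forall>j\<in>S. w j \<in> Z j"
    and sum0: "(\<Sum>j\<in>S. w j) = 0"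
  shows "\<forall>j\<in>S. w j = 0"
proof -
  define w' where "w' j = (if j \<in> S then w j else 0)" for j
  have "\<forall>j\<le>d. w' j \<in> Z j"
    using w decomposition_subspace[OF dec] by (auto simp: w'_def vec.subspace_0)
  moreover have "(\<Sum>j\<le>d. w' j) = 0"
    using S sum0 by (simp add: w'_def sum.If_cases Int_absorb1)
  ultimately have "\<forall>j\<le>d. w' j = 0" using dec unfolding decomposition_def by blast
  then show ?thesis using S by (auto simp: w'_def)
qed

lemma decomposition_inter_Suc:
  assumes dec: "decomposition Z d" and "Suc i \<le> d" and "y \<in> Z i" and "y \<in> Z (Suc i)"
  shows "y = 0"
proof -
  define w where "w j = (if j = i then y else - y)" for j
  have "\<forall>j\<in>{i, Suc i}. w j \<in> Z j"
    using assms by (auto simp: w_def intro: vec.subspace_neg decomposition_subspace)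
  moreover have "(\<Sum>j\<in>{i, Suc i}. w j) = 0" by (simp add: w_def)
  moreover have "{i, Suc i} \<subseteq> {..d}" using assms(2) by auto
  ultimately have "w i = 0" using decomposition_components_eq_0[OF dec] by blast
  then show ?thesis by (simp add: w_def)
qed

lemma decomposition_ssum_eq_UNIV:
  assumes "decomposition Z d"
  shows "ssum Z {0..d} = UNIV"
proof -
  have "v \<in> ssum Z {0..d}" for v
  proof -
    obtain w where "\<forall>i\<le>d. w i \<in> Z i" and "v = (\<Sum>i\<le>d. w i)"
      using assms unfolding decomposition_def by blast
    then show ?thesis by (auto intro!: vec.subspace_sum[OF ssum_subspace] ssum_base)
  qed
  then show ?thesis by auto
qed

lemma subspace_eq_UNIV_if_decomposition_subset:
  assumes "decomposition Z d" and "vec.subspace S" and "\<And>i. i \<le> d \<Longrightarrow> Z i \<subseteq> S"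
  shows "S = UNIV"
proof -
  have "ssum Z {0..d} \<subseteq> S"
    using assms(2,3) by (intro ssum_least) auto
  then show ?thesis using decomposition_ssum_eq_UNIV[OF assms(1)] by auto
qed

lemma matrix_eq_on_decomposition:
  fixes M N :: "'k::field^'n^'n"
  assumes "decomposition Z d" and "\<And>i v. i \<le> d \<Longrightarrow> v \<in> Z i \<Longrightarrow> M *v v = N *v v"
  shows "M = N"
  using decomposition_ssum_eq_UNIV[OF assms(1)] assms(2)
  by (intro matrix_eq_on_span[of "\<Union>i\<in>{0..d}. Z i"]) (auto simp: ssum_def)

lemma invertible_if_nonzero_on_decomposition:
  fixes D :: "'k::field^'n^'n"
  assumes dec: "decomposition Z d"
    and diag: "\<And>i v. i \<le> d \<Longrightarrow> v \<in> Z i \<Longrightarrow> D *v v = \<theta> i *s v"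
    and nz: "\<And>i. i \<le> d \<Longrightarrow> \<theta> i \<noteq> 0"
  shows "invertible D"
proof -
  have "x = 0" if "D *v x = 0" for x
  proof -
    obtain w where w: "\<forall>i\<le>d. w i \<in> Z i" and x: "x = (\<Sum>i\<le>d. w i)"
      using dec unfolding decomposition_def by blast
    have "D *v x = (\<Sum>i\<le>d. D *v w i)"
      unfolding x by (rule vec.linear_sum[OF matrix_vector_mul_linear_gen])
    also have "\<dots> = (\<Sum>i\<le>d. \<theta> i *s w i)"
      using w diag by (intro sum.cong) auto
    finally have "(\<Sum>i\<le>d. \<theta> i *s w i) = 0" using that by simp
    moreover have "\<forall>j\<in>{..d}. \<theta> j *s w j \<in> Z j"
      using w decomposition_subspace[OF dec] by (simp add: vec.subspace_scale)
    ultimately have "\<forall>i\<in>{..d}. \<theta> i *s w i = 0"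
      by (intro decomposition_components_eq_0[OF dec order_refl])
    then have "w i = 0" if "i \<le> d" for i
      using nz that by simp
    then show "x = 0" by (simp add: x)
  qed
  then show ?thesis
    by (simp add: invertible_left_inverse matrix_left_invertible_ker)
qed

lemma matrix_inv_mult:
  fixes D :: "'k::field^'n^'n"
  assumes "invertible D"
  shows "D ** matrix_inv D = mat 1" and "matrix_inv D ** D = mat 1"
  using someI_ex[OF assms[unfolded invertible_def]] unfolding matrix_inv_def by blast+

lemma matrix_inv_eigenvector:
  fixes D :: "'k::field^'n^'n"
  assumes "invertible D" and "D *v v = c *s v" and "c \<noteq> 0"
  shows "matrix_inv D *v v = inverse c *s v"
proof -
  have "v = matrix_inv D *v (D *v v)"
    by (simp add: matrix_vector_mul_assoc matrix_inv_mult(2)[OF assms(1)])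
  then have "v = c *s (matrix_inv D *v v)"
    using assms(2) by (simp add: vector_scalar_commute)
  then have "inverse c *s v = (inverse c * c) *s (matrix_inv D *v v)"
    by (metis vector_smult_assoc)
  then show ?thesis
    using assms(3) by simp
qed

section \<open>Flag decompositions\<close>

locale flag_decomposition =
  fixes Z P Q :: "nat \<Rightarrow> ('k::field^'n) set" and d :: nat
  assumes decomposition: "decomposition Z d"
    and Z_eq: "\<And>i. i \<le> d \<Longrightarrow> Z i = P i \<inter> Q i"
    and P_mono: "\<And>i j. i \<le> j \<Longrightarrow> j \<le> d \<Longrightarrow> P i \<subseteq> P j"
    and Q_antimono: "\<And>i j. i \<le> j \<Longrightarrow> j \<le> d \<Longrightarrow> Q j \<subseteq> Q i"
    and P_subspace: "\<And>i. i \<le> d \<Longrightarrow> vec.subspace (P i)"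
    and Q_subspace: "\<And>i. i \<le> d \<Longrightarrow> vec.subspace (Q i)"
begin

lemma Z_subset_P: "k \<le> i \<Longrightarrow> i \<le> d \<Longrightarrow> Z k \<subseteq> P i"
  using Z_eq[of k] P_mono[of k i] by auto

lemma Z_subset_Q: "i \<le> k \<Longrightarrow> k \<le> d \<Longrightarrow> Z k \<subseteq> Q i"
  using Z_eq[of k] Q_antimono[of i k] by auto

lemma component_above_eq_0:
  assumes i: "i \<le> d" and x: "x \<in> P i" and w: "\<forall>k\<le>d. w k \<in> Z k" and xw: "x = (\<Sum>k\<le>d. w k)"
    and j: "i < j" "j \<le> d"
  shows "w j = 0"
proof -
  have Si: "Suc i \<le> d" using j by simp
  define y where "y = (\<Sum>k\<in>{i<..d}. w k)"
  have split: "{..d} = {..i} \<union> {i<..d}" using i by auto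
  have "x = (\<Sum>k\<le>i. w k) + y"
    unfolding xw y_def split by (subst sum.union_disjoint) auto
  moreover have "(\<Sum>k\<le>i. w k) \<in> P i"
  proof (rule vec.subspace_sum[OF P_subspace[OF i]])
    show "w k \<in> P i" if "k \<in> {..i}" for k using that w i Z_subset_P[of k i] by auto
  qed
  ultimately have "y \<in> P i"
    using x P_subspace[OF i] by (metis add_diff_cancel_left' vec.subspace_diff)
  moreover have "y \<in> Q (Suc i)" unfolding y_def
  proof (rule vec.subspace_sum[OF Q_subspace[OF Si]])
    show "w k \<in> Q (Suc i)" if "k \<in> {i<..d}" for k using that w Z_subset_Q[of "Suc i" k] by auto
  qed
  ultimately have "y \<in> Z i" and "y \<in> Z (Suc i)"
    using Z_eq[OF i] Z_eq[OF Si] P_mono[OF _ Si, of i] Q_antimono[OF _ Si, of i] by auto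
  then have "y = 0" by (rule decomposition_inter_Suc[OF decomposition Si])
  moreover have "\<forall>k\<in>{i<..d}. w k \<in> Z k" using w by simp
  ultimately have "\<forall>k\<in>{i<..d}. w k = 0"
    unfolding y_def by (intro decomposition_components_eq_0[OF decomposition]) auto
  then show ?thesis using j by simp
qed

lemma component_below_eq_0:
  assumes i: "i \<le> d" and x: "x \<in> Q i" and w: "\<forall>k\<le>d. w k \<in> Z k" and xw: "x = (\<Sum>k\<le>d. w k)"
    and j: "j < i"
  shows "w j = 0"
proof -
  obtain h where h: "i = Suc h" using j by (cases i) auto
  have hd: "h \<le> d" using i h by simp
  define y where "y = (\<Sum>k\<le>h. w k)"
  have split: "{..d} = {..h} \<union> {i..d}" using i h by auto
  have "x = y + (\<Sum>k\<in>{i..d}. w k)"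
    unfolding xw y_def split by (subst sum.union_disjoint) (use h in auto)
  moreover have "(\<Sum>k\<in>{i..d}. w k) \<in> Q i"
  proof (rule vec.subspace_sum[OF Q_subspace[OF i]])
    show "w k \<in> Q i" if "k \<in> {i..d}" for k using that w Z_subset_Q[of i k] by auto
  qed
  ultimately have "y \<in> Q i"
    using x Q_subspace[OF i] by (metis add_diff_cancel_right' vec.subspace_diff)
  moreover have "y \<in> P h" unfolding y_def
  proof (rule vec.subspace_sum[OF P_subspace[OF hd]])
    show "w k \<in> P h" if "k \<in> {..h}" for k using that w hd Z_subset_P[of k h] by auto
  qed
  ultimately have "y \<in> Z h" and "y \<in> Z (Suc h)"
    using Z_eq[OF hd] Z_eq[OF i] P_mono[OF _ i, of h] Q_antimono[OF _ i, of h] h by auto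
  then have "y = 0" using decomposition_inter_Suc[OF decomposition] i h by blast
  moreover have "\<forall>k\<in>{..h}. w k \<in> Z k" using w hd by simp
  ultimately have "\<forall>k\<in>{..h}. w k = 0"
    unfolding y_def using hd by (intro decomposition_components_eq_0[OF decomposition]) auto
  then show ?thesis using j h by simp
qed

lemma in_ssum_interval:
  assumes "i \<le> d" "j \<le> d" "x \<in> Q i" "x \<in> P j"
  shows "x \<in> ssum Z {i..j}"
proof -
  obtain w where w: "\<forall>k\<le>d. w k \<in> Z k" and xw: "x = (\<Sum>k\<le>d. w k)"
    using decomposition unfolding decomposition_def by blast
  have "w k = 0" if "k \<in> {..d} - {i..j}" for k
    using that assms component_above_eq_0[OF _ _ w xw] component_below_eq_0[OF _ _ w xw]
    by (cases "k < i") auto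
  then have "x = (\<Sum>k\<in>{i..j}. w k)"
    unfolding xw using assms(2) by (intro sum.mono_neutral_right) auto
  also have "\<dots> \<in> ssum Z {i..j}"
    using w assms(2) by (intro vec.subspace_sum[OF ssum_subspace] ssum_base) auto
  finally show ?thesis .
qed

end

section \<open>q-commutation relations\<close>

lemma mat_mult_mat: "(mat a :: 'k::field^'n^'n) ** mat b = mat (a * b)"
  by (simp add: matrix_eq mat_mult_matrix_vector_mult flip: matrix_vector_mul_assoc)
    (simp add: mat_matrix_vector_mult vector_smult_assoc)

definition qcomm_one :: "'k::field \<Rightarrow> 'k^'n^'n \<Rightarrow> 'k^'n^'n \<Rightarrow> bool" where
  "qcomm_one q P Q \<longleftrightarrow>
     mat (inverse (q - inverse q)) ** (mat q ** (P ** Q) - mat (inverse q) ** (Q ** P)) = mat 1"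

lemma q_minus_inverse_nonzero: "q \<noteq> 0 \<Longrightarrow> q^2 \<noteq> 1 \<Longrightarrow> q - inverse q \<noteq> (0::'k::field)"
  by (auto simp: power2_eq_square field_simps)

lemma qcomm_matrix_vector_mult:
  "(mat q ** (P ** Q) - mat (inverse q) ** (Q ** P)) *v v
     = q *s (P *v (Q *v v)) - inverse q *s (Q *v (P *v v))" for P Q :: "'k::field^'n^'n"
  by (simp add: matrix_vector_mult_diff_rdistrib mat_mult_matrix_vector_mult mat_matrix_vector_mult
      flip: matrix_vector_mul_assoc)

lemma qcomm_one_iff:
  fixes P Q :: "'k::field^'n^'n"
  assumes "q - inverse q \<noteq> 0"
  shows "qcomm_one q P Q \<longleftrightarrow> mat q ** (P ** Q) - mat (inverse q) ** (Q ** P) = mat (q - inverse q)"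
    (is "_ \<longleftrightarrow> ?M = mat ?c")
proof
  assume "qcomm_one q P Q"
  then have "mat ?c ** (mat (inverse ?c) ** ?M) = mat ?c"
    by (simp add: qcomm_one_def)
  then show "?M = mat ?c"
    using assms by (simp add: matrix_mul_assoc mat_mult_mat)
next
  assume "?M = mat ?c"
  then show "qcomm_one q P Q"
    using assms by (simp add: qcomm_one_def mat_mult_mat)
qed

lemma qcomm_one_swap: "qcomm_one (inverse q) Q P \<longleftrightarrow> qcomm_one q P Q"
proof -
  have "inverse (inverse q - q) = - inverse (q - inverse q)"
    by (metis inverse_minus_eq minus_diff_eq)
  then show ?thesis
    unfolding qcomm_one_def
    by (simp add: matrix_eq mat_mult_matrix_vector_mult matrix_vector_mult_diff_rdistrib
        mat_matrix_vector_mult vec_eq_iff algebra_simps flip: matrix_vector_mul_assoc)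
qed

lemma qcomm_one_on_eigenvector:
  fixes P Q :: "'k::field^'n^'n"
  assumes "q \<noteq> 0" and "\<mu> \<noteq> 0" and Qv: "Q *v v = \<mu> *s v"
    and shift: "Q *v (P *v v - inverse \<mu> *s v) = (q^2 * \<mu>) *s (P *v v - inverse \<mu> *s v)"
  shows "q *s (P *v (Q *v v)) - inverse q *s (Q *v (P *v v)) = (q - inverse q) *s v"
proof -
  have QP: "Q *v (P *v v) = (q^2 * \<mu>) *s (P *v v) + (1 - q^2) *s v"
    using shift assms(2) by (simp add: Qv matrix_vector_mult_diff_distrib vector_scalar_commute
        vec_eq_iff field_simps)
  show ?thesis
    using assms(1) by (simp add: Qv QP vector_scalar_commute vec_eq_iff field_simps power2_eq_square)
qed

lemma qcomm_one_eigenvector_shift: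
  fixes P Q :: "'k::field^'n^'n"
  assumes "qcomm_one q P Q" and "q \<noteq> 0" and "q^2 \<noteq> 1" and "\<mu> \<noteq> 0" and Pv: "P *v v = \<mu> *s v"
  shows "Q *v v - inverse \<mu> *s v \<in> eigenspace P (\<mu> / q^2)"
proof -
  have "q *s (P *v (Q *v v)) - inverse q *s (Q *v (P *v v)) = (q - inverse q) *s v"
    using assms(1-3) qcomm_one_iff[OF q_minus_inverse_nonzero]
    by (metis qcomm_matrix_vector_mult mat_matrix_vector_mult)
  then have PQ: "P *v (Q *v v) = (\<mu> / q^2) *s (Q *v v) + (1 - inverse (q^2)) *s v"
    using assms(2) by (simp add: Pv vector_scalar_commute vec_eq_iff field_simps power2_eq_square)
  show ?thesis
    unfolding eigenspace_def
    using assms(2,4) by (simp add: PQ Pv matrix_vector_mult_diff_distrib vector_scalar_commute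
        vec_eq_iff field_simps)
qed

lemma qcomm_one_on_decomposition:
  fixes P Q :: "'k::field^'n^'n"
  assumes dec: "decomposition Z d" and q: "q \<noteq> 0" "q^2 \<noteq> 1"
    and diag: "\<And>i v. i \<le> d \<Longrightarrow> v \<in> Z i \<Longrightarrow> Q *v v = \<theta> i *s v"
    and inv: "\<And>i. i \<le> d \<Longrightarrow> \<mu> i * \<theta> i = 1"
    and shift: "\<And>i v. i \<le> d \<Longrightarrow> v \<in> Z i \<Longrightarrow>
      Q *v (P *v v - \<mu> i *s v) = (q^2 * \<theta> i) *s (P *v v - \<mu> i *s v)"
  shows "qcomm_one q P Q"
proof -
  have "mat q ** (P ** Q) - mat (inverse q) ** (Q ** P) = mat (q - inverse q)"
  proof (rule matrix_eq_on_decomposition[OF dec])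
    fix i v assume i: "i \<le> d" and v: "v \<in> Z i"
    have "\<theta> i \<noteq> 0" and "\<mu> i = inverse (\<theta> i)"
      using inv[OF i] by (auto simp: inverse_unique mult.commute)
    then show "(mat q ** (P ** Q) - mat (inverse q) ** (Q ** P)) *v v = mat (q - inverse q) *v v"
      using qcomm_one_on_eigenvector[OF q(1) _ diag[OF i v]] shift[OF i v]
      by (simp add: qcomm_matrix_vector_mult mat_matrix_vector_mult)
  qed
  then show ?thesis
    using qcomm_one_iff[OF q_minus_inverse_nonzero[OF q]] by blast
qed

lemma qcomm_one_ssum_shift:
  fixes D M :: "'k::field^'n^'n"
  assumes R: "qcomm_one p D M" and p: "p \<noteq> 0" "p^2 \<noteq> 1"
    and nz: "\<And>k. k \<in> I \<Longrightarrow> \<theta> k \<noteq> 0"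
    and eig: "\<And>k. k \<in> I \<Longrightarrow> E k \<subseteq> eigenspace D (\<theta> k)"
    and next_eig: "\<And>k. k \<in> I \<Longrightarrow> eigenspace D (\<theta> k / p^2) \<subseteq> ssum E J"
    and "I \<subseteq> J"
    and x: "x \<in> ssum E I"
  shows "M *v x \<in> ssum E J"
proof (rule ssum_image_subset[OF _ ssum_subspace x])
  fix k u assume k: "k \<in> I" and u: "u \<in> E k"
  have "D *v u = \<theta> k *s u" using eig[OF k] u by (auto simp: eigenspace_def)
  then have "M *v u - inverse (\<theta> k) *s u \<in> ssum E J"
    using qcomm_one_eigenvector_shift[OF R p nz[OF k]] next_eig[OF k] by blast
  moreover have "inverse (\<theta> k) *s u \<in> ssum E J"
    using k u \<open>I \<subseteq> J\<close> by (intro vec.subspace_scale[OF ssum_subspace] ssum_base) auto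
  ultimately show "M *v u \<in> ssum E J"
    by (metis diff_add_cancel vec.subspace_add[OF ssum_subspace])
qed

section \<open>q-Serre relations\<close>

definition q_serre :: "'k::field \<Rightarrow> 'k^'n^'n \<Rightarrow> 'k^'n^'n \<Rightarrow> 'k^'n^'n" where
  "q_serre q X Y = X ** X ** X ** Y - mat (qint3 q) ** (X ** X ** Y ** X)
     + mat (qint3 q) ** (X ** Y ** X ** X) - Y ** X ** X ** X"

lemma qint3_eq: "q \<noteq> 0 \<Longrightarrow> q^2 \<noteq> 1 \<Longrightarrow> qint3 q = q^2 + 1 + inverse (q^2)"
  using q_minus_inverse_nonzero[of q]
  by (simp add: qint3_def field_simps power2_eq_square power3_eq_cube)

lemma cubic_with_roots_ratio:
  fixes r l m :: "'k::field"
  assumes "r \<noteq> 0"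
  shows "m^3 - (r + 1 + inverse r) * l * m^2 + (r + 1 + inverse r) * l^2 * m - l^3
    = (m - l) * (m - r * l) * (m - l / r)"
  using assms by (simp add: field_simps power2_eq_square power3_eq_cube)

lemma eigenvalue_neighbours:
  fixes \<theta> :: "nat \<Rightarrow> 'k::field"
  assumes step: "\<And>i. i < d \<Longrightarrow> \<theta> (Suc i) = r * \<theta> i" and "r \<noteq> 0"
    and "i \<le> d" and "j \<in> {i - 1, i, i + 1} \<inter> {0..d}"
  shows "\<theta> j = \<theta> i \<or> \<theta> j = r * \<theta> i \<or> \<theta> j = \<theta> i / r"
proof -
  consider "j = i" | "j = Suc i" "i < d" | "Suc j = i"
    using assms(3,4) by force
  then show ?thesis
  proof cases
    case 3
    then have "\<theta> i = r * \<theta> j" using step[of j] assms(3) by simp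
    then show ?thesis using \<open>r \<noteq> 0\<close> by simp
  qed (use step in simp_all)
qed

lemma q_serre_eq_0_if_tridiag:
  fixes D T :: "'k::field^'n^'n"
  assumes span: "ssum E {0..d} = UNIV"
    and diag: "\<And>i v. i \<le> d \<Longrightarrow> v \<in> E i \<Longrightarrow> D *v v = \<theta> i *s v"
    and step: "\<And>i. i < d \<Longrightarrow> \<theta> (Suc i) = r * \<theta> i" and r: "r \<noteq> 0"
    and c: "qint3 q = r + 1 + inverse r"
    and tri: "tridiag_ordering T E d"
  shows "q_serre q D T = 0"
proof (rule matrix_eq_on_span[OF span[unfolded ssum_def]])
  fix v assume "v \<in> (\<Union>i\<in>{0..d}. E i)"
  then obtain i where i: "i \<le> d" and v: "v \<in> E i" by auto
  define l where "l = \<theta> i"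
  define N where "N = D ** D ** D - mat (qint3 q * l) ** (D ** D) + mat (qint3 q * l^2) ** D - mat (l^3)"
  have N_apply: "N *v u = D *v (D *v (D *v u)) - (qint3 q * l) *s (D *v (D *v u))
      + (qint3 q * l^2) *s (D *v u) - l^3 *s u" for u
    by (simp add: N_def matrix_vector_mult_diff_rdistrib matrix_vector_mult_add_rdistrib
        mat_mult_matrix_vector_mult mat_matrix_vector_mult flip: matrix_vector_mul_assoc)
  have "q_serre q D T *v v = N *v (T *v v)"
    using diag[OF i v]
    by (simp add: q_serre_def N_apply l_def matrix_vector_mult_diff_rdistrib
        matrix_vector_mult_add_rdistrib mat_mult_matrix_vector_mult mat_matrix_vector_mult vector_scalar_commute
        vector_smult_assoc power2_eq_square power3_eq_cube mult_ac flip: matrix_vector_mul_assoc)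
  also have "\<dots> = 0"
  proof (rule ssum_image_subset[OF _ vec.subspace_single_0, simplified])
    fix j u assume j: "j \<in> {i - 1, i, i + 1} \<inter> {0..d}" and u: "u \<in> E j"
    have "j \<le> d" using j by simp
    then have Du: "D *v u = \<theta> j *s u" using diag u by blast
    have "\<theta> j = l \<or> \<theta> j = r * l \<or> \<theta> j = l / r"
      unfolding l_def by (rule eigenvalue_neighbours[of d \<theta> r, OF step r i j])
    then have "\<theta> j ^ 3 - qint3 q * l * \<theta> j ^ 2 + qint3 q * l^2 * \<theta> j - l^3 = 0"
      unfolding c cubic_with_roots_ratio[OF r] by auto
    moreover have "N *v u = (\<theta> j ^ 3 - qint3 q * l * \<theta> j ^ 2 + qint3 q * l^2 * \<theta> j - l^3) *s u"
      by (simp add: N_apply Du vector_scalar_commute vector_smult_assoc vec_eq_iff algebra_simps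
          power2_eq_square power3_eq_cube)
    ultimately show "N *v u = 0" by simp
  next
    show "T *v v \<in> ssum E ({i - 1, i, i + 1} \<inter> {0..d})"
      using tri i v unfolding tridiag_ordering_def by blast
  qed
  finally show "q_serre q D T *v v = 0 *v v" by simp
qed

lemma subspace_diff_scale: "vec.subspace S \<Longrightarrow> x \<in> S \<Longrightarrow> y \<in> S \<Longrightarrow> x - c *s y \<in> S"
  by (simp add: vec.subspace_diff vec.subspace_scale)

section \<open>The generators on a tridiagonal pair\<close>

(* X0, X1, Z0, Z1, K are the prospective images of y+_0, y+_1, y-_0, y-_1, k_0, that is
   A/a, A*/a*, B*/b*, B/b, K*; Vs i and Vss i are V_i and V*_i. *)
locale tdp_generators =
  fixes q :: "'k::field"
    and X0 X1 Z0 Z1 K :: "'k^'n^'n"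
    and Vs Vss :: "nat \<Rightarrow> ('k^'n) set"
    and d :: nat
  assumes q_nz: "q \<noteq> 0" and q_sq: "q^2 \<noteq> 1"
    and irreducible: "\<And>U. vec.subspace U \<Longrightarrow> (\<lambda>v. X0 *v v) ` U \<subseteq> U \<Longrightarrow>
      (\<lambda>v. X1 *v v) ` U \<subseteq> U \<Longrightarrow> U = {0} \<or> U = UNIV"
    and Vs_eigenspace: "\<And>i. i \<le> d \<Longrightarrow> Vs i = eigenspace X0 (q powi (2 * int i - int d))"
    and Vss_eigenspace: "\<And>i. i \<le> d \<Longrightarrow> Vss i = eigenspace X1 (q powi (int d - 2 * int i))"
    and tridiag_X1: "tridiag_ordering X1 Vs d"
    and tridiag_X0: "tridiag_ordering X0 Vss d"
    and dec_Z1: "decomposition (\<lambda>i. ssum Vss {0..i} \<inter> ssum Vs {0..d - i}) d"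
    and dec_Z0: "decomposition (\<lambda>i. ssum Vss {d - i..d} \<inter> ssum Vs {i..d}) d"
    and dec_K: "decomposition (\<lambda>i. ssum Vss {d - i..d} \<inter> ssum Vs {0..d - i}) d"
    and Z1_action: "\<And>i v. i \<le> d \<Longrightarrow> v \<in> ssum Vss {0..i} \<inter> ssum Vs {0..d - i} \<Longrightarrow>
      Z1 *v v = q powi (2 * int i - int d) *s v"
    and Z0_action: "\<And>i v. i \<le> d \<Longrightarrow> v \<in> ssum Vss {d - i..d} \<inter> ssum Vs {i..d} \<Longrightarrow>
      Z0 *v v = q powi (int d - 2 * int i) *s v"
    and K_action: "\<And>i v. i \<le> d \<Longrightarrow> v \<in> ssum Vss {d - i..d} \<inter> ssum Vs {0..d - i} \<Longrightarrow>
      K *v v = q powi (2 * int i - int d) *s v"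
begin

abbreviation Ki :: "'k^'n^'n" where "Ki \<equiv> matrix_inv K"

definition \<theta> :: "nat \<Rightarrow> 'k" where "\<theta> i = q powi (2 * int i - int d)"

lemma \<theta>_nonzero: "\<theta> i \<noteq> 0"
  using q_nz by (simp add: \<theta>_def)

lemma \<theta>_Suc: "\<theta> (Suc i) = q^2 * \<theta> i"
proof -
  have "2 * int (Suc i) - int d = (2 * int i - int d) + 2" by simp
  then have "\<theta> (Suc i) = q powi ((2 * int i - int d) + 2)" by (simp only: \<theta>_def)
  also have "\<dots> = q powi (2 * int i - int d) * q powi 2" using q_nz by (rule power_int_add[OF disjI1])
  finally show ?thesis by (simp add: \<theta>_def)
qed

lemma powi_eq_inverse_\<theta>: "q powi (int d - 2 * int i) = inverse (\<theta> i)"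
  unfolding \<theta>_def by (metis power_int_minus minus_diff_eq)

lemma \<theta>_reflect: "i \<le> d \<Longrightarrow> \<theta> (d - i) = inverse (\<theta> i)"
proof -
  assume "i \<le> d"
  then have "2 * int (d - i) - int d = int d - 2 * int i" by simp
  then show ?thesis unfolding powi_eq_inverse_\<theta>[symmetric] by (simp add: \<theta>_def)
qed

definition "A_le j = ssum Vs {0..j}"
definition "A_ge j = ssum Vs {j..d}"
definition "As_le j = ssum Vss {0..j}"
definition "As_ge j = ssum Vss {j..d}"

(* The decompositions on which B, B* and K* act diagonally. *)
definition "EB i = As_le i \<inter> A_le (d - i)"
definition "EBs i = As_ge (d - i) \<inter> A_ge i"
definition "EK i = As_ge (d - i) \<inter> A_le (d - i)"

lemma flag_subspaces [simp]:
  "vec.subspace (A_le j)" "vec.subspace (A_ge j)" "vec.subspace (As_le j)" "vec.subspace (As_ge j)"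
  by (simp_all add: A_le_def A_ge_def As_le_def As_ge_def ssum_subspace)

lemma A_le_mono: "i \<le> j \<Longrightarrow> A_le i \<subseteq> A_le j"
  unfolding A_le_def by (rule ssum_mono) auto

lemma As_le_mono: "i \<le> j \<Longrightarrow> As_le i \<subseteq> As_le j"
  unfolding As_le_def by (rule ssum_mono) auto

lemma A_ge_antimono: "i \<le> j \<Longrightarrow> A_ge j \<subseteq> A_ge i"
  unfolding A_ge_def by (rule ssum_mono) auto

lemma As_ge_antimono: "i \<le> j \<Longrightarrow> As_ge j \<subseteq> As_ge i"
  unfolding As_ge_def by (rule ssum_mono) auto

lemma dec_EB: "decomposition EB d"
  using dec_Z1 unfolding EB_def[abs_def] As_le_def A_le_def .

lemma dec_EBs: "decomposition EBs d"
  using dec_Z0 unfolding EBs_def[abs_def] As_ge_def A_ge_def .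

lemma dec_EK: "decomposition EK d"
  using dec_K unfolding EK_def[abs_def] As_ge_def A_le_def .

lemma A_le_eq_UNIV: "d \<le> j \<Longrightarrow> A_le j = UNIV"
proof (rule subspace_eq_UNIV_if_decomposition_subset[OF dec_EB flag_subspaces(1)])
  show "EB i \<subseteq> A_le j" if "d \<le> j" for i
    using A_le_mono[of "d - i" j] that by (simp add: EB_def le_infI2)
qed

lemma As_le_eq_UNIV: "d \<le> j \<Longrightarrow> As_le j = UNIV"
proof (rule subspace_eq_UNIV_if_decomposition_subset[OF dec_EB flag_subspaces(3)])
  show "EB i \<subseteq> As_le j" if "d \<le> j" "i \<le> d" for i using that As_le_mono[of i j] by (auto simp: EB_def)
qed

lemma A_ge_0: "A_ge 0 = UNIV"
  using A_le_eq_UNIV[of d] by (simp add: A_ge_def A_le_def)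

lemma As_ge_0: "As_ge 0 = UNIV"
  using As_le_eq_UNIV[of d] by (simp add: As_ge_def As_le_def)

lemma flag_EB: "flag_decomposition EB As_le (\<lambda>i. A_le (d - i)) d"
  by unfold_locales (simp_all add: dec_EB EB_def As_le_mono A_le_mono)

lemma flag_EBs: "flag_decomposition EBs (\<lambda>i. As_ge (d - i)) A_ge d"
  by unfold_locales (simp_all add: dec_EBs EBs_def As_ge_antimono A_ge_antimono)

lemma flag_EK: "flag_decomposition EK (\<lambda>i. As_ge (d - i)) (\<lambda>i. A_le (d - i)) d"
  by unfold_locales (simp_all add: dec_EK EK_def As_ge_antimono A_le_mono)

lemma Vs_eq_eigenspace: "i \<le> d \<Longrightarrow> Vs i = eigenspace X0 (\<theta> i)"
  by (simp add: Vs_eigenspace \<theta>_def)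

lemma Vss_eq_eigenspace: "i \<le> d \<Longrightarrow> Vss i = eigenspace X1 (inverse (\<theta> i))"
  by (simp add: Vss_eigenspace powi_eq_inverse_\<theta>)

lemma X0_Vs: "i \<le> d \<Longrightarrow> v \<in> Vs i \<Longrightarrow> X0 *v v = \<theta> i *s v"
  by (simp add: Vs_eq_eigenspace eigenspace_def)

lemma X1_Vss: "i \<le> d \<Longrightarrow> v \<in> Vss i \<Longrightarrow> X1 *v v = inverse (\<theta> i) *s v"
  by (simp add: Vss_eq_eigenspace eigenspace_def)

lemma Z1_EB: "i \<le> d \<Longrightarrow> v \<in> EB i \<Longrightarrow> Z1 *v v = \<theta> i *s v"
  using Z1_action by (simp add: EB_def As_le_def A_le_def \<theta>_def)

lemma Z0_EBs: "i \<le> d \<Longrightarrow> v \<in> EBs i \<Longrightarrow> Z0 *v v = inverse (\<theta> i) *s v"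
  using Z0_action by (simp add: EBs_def As_ge_def A_ge_def powi_eq_inverse_\<theta>)

lemma K_EK: "i \<le> d \<Longrightarrow> v \<in> EK i \<Longrightarrow> K *v v = \<theta> i *s v"
  using K_action by (simp add: EK_def As_ge_def A_le_def \<theta>_def)

lemma K_invertible: "invertible K"
  by (rule invertible_if_nonzero_on_decomposition[OF dec_EK K_EK \<theta>_nonzero])

lemma Ki_EK: "i \<le> d \<Longrightarrow> v \<in> EK i \<Longrightarrow> Ki *v v = inverse (\<theta> i) *s v"
  by (rule matrix_inv_eigenvector[OF K_invertible K_EK \<theta>_nonzero])

lemma X1_maps_A_le: "x \<in> A_le j \<Longrightarrow> X1 *v x \<in> A_le (Suc j)"
proof (cases "j < d")
  case True
  assume "x \<in> A_le j"
  then show ?thesis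
    using True unfolding A_le_def by (intro tridiag_ordering_ssum[OF tridiag_X1, of "{0..j}"]) auto
qed (simp add: A_le_eq_UNIV)

lemma X1_maps_A_ge: "x \<in> A_ge j \<Longrightarrow> X1 *v x \<in> A_ge (j - 1)"
  unfolding A_ge_def by (rule tridiag_ordering_ssum[OF tridiag_X1]) auto

lemma X0_maps_As_le: "x \<in> As_le j \<Longrightarrow> X0 *v x \<in> As_le (Suc j)"
proof (cases "j < d")
  case True
  assume "x \<in> As_le j"
  then show ?thesis
    using True unfolding As_le_def by (intro tridiag_ordering_ssum[OF tridiag_X0, of "{0..j}"]) auto
qed (simp add: As_le_eq_UNIV)

lemma X0_maps_As_ge: "x \<in> As_ge j \<Longrightarrow> X0 *v x \<in> As_ge (j - 1)"
  unfolding As_ge_def by (rule tridiag_ordering_ssum[OF tridiag_X0]) auto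

lemma q_inverse: "inverse q \<noteq> 0" "(inverse q)^2 \<noteq> 1"
  using q_nz q_sq by (auto simp: power_inverse)

lemma qcomm_X0_maps_A_ge:
  assumes "qcomm_one q X0 M" and "x \<in> A_ge j"
  shows "M *v x \<in> A_ge (j - 1)"
proof (cases j)
  case (Suc h)
  have "eigenspace X0 (\<theta> k / q^2) \<subseteq> ssum Vs {h..d}" if "k \<in> {j..d}" for k
  proof -
    have "\<theta> k / q^2 = \<theta> (k - 1)"
      using that Suc q_nz \<theta>_Suc[of "k - 1"] by (simp add: Suc_pred')
    moreover have "k - 1 \<in> {h..d}" using that Suc by auto
    ultimately show ?thesis using Vs_eq_eigenspace[of "k - 1"] ssum_base[of "k - 1" "{h..d}" _ Vs] by auto
  qed
  then show ?thesis
    using assms Suc unfolding A_ge_def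
    by (intro qcomm_one_ssum_shift[OF _ q_nz q_sq \<theta>_nonzero, of X0 M "{j..d}"]) (auto simp: Vs_eq_eigenspace)
qed (simp add: A_ge_0)

lemma qcomm_X1_maps_As_le:
  assumes "qcomm_one q X1 M" and "x \<in> As_le j"
  shows "M *v x \<in> As_le (Suc j)"
proof (cases "j < d")
  case True
  have "eigenspace X1 (inverse (\<theta> k) / q^2) \<subseteq> ssum Vss {0..Suc j}" if "k \<in> {0..j}" for k
  proof -
    have "inverse (\<theta> k) / q^2 = inverse (\<theta> (Suc k))" by (simp add: \<theta>_Suc field_simps)
    moreover have "Suc k \<in> {0..Suc j}" "Suc k \<le> d" using that True by auto
    ultimately show ?thesis using Vss_eq_eigenspace[of "Suc k"] ssum_base[of "Suc k" "{0..Suc j}" _ Vss] by auto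
  qed
  then show ?thesis
    using assms True unfolding As_le_def
    by (intro qcomm_one_ssum_shift[OF _ q_nz q_sq, of X1 M "{0..j}" "\<lambda>k. inverse (\<theta> k)"])
      (auto simp: Vss_eq_eigenspace \<theta>_nonzero)
qed (simp add: As_le_eq_UNIV)

lemma qcomm_maps_As_ge_X1:
  assumes "qcomm_one q M X1" and "x \<in> As_ge j"
  shows "M *v x \<in> As_ge (j - 1)"
proof (cases j)
  case (Suc h)
  have "eigenspace X1 (inverse (\<theta> k) / (inverse q)^2) \<subseteq> ssum Vss {h..d}" if "k \<in> {j..d}" for k
  proof -
    have "inverse (\<theta> k) / (inverse q)^2 = inverse (\<theta> (k - 1))"
      using that Suc q_nz \<theta>_Suc[of "k - 1"] \<theta>_nonzero[of "k - 1"] by (simp add: Suc_pred' field_simps)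
    moreover have "k - 1 \<in> {h..d}" using that Suc by auto
    ultimately show ?thesis using Vss_eq_eigenspace[of "k - 1"] ssum_base[of "k - 1" "{h..d}" _ Vss] by auto
  qed
  moreover have "qcomm_one (inverse q) X1 M" using assms(1) by (simp add: qcomm_one_swap)
  ultimately show ?thesis
    using assms(2) Suc unfolding As_ge_def
    by (intro qcomm_one_ssum_shift[OF _ q_inverse, of X1 M "{j..d}" "\<lambda>k. inverse (\<theta> k)"])
      (auto simp: Vss_eq_eigenspace \<theta>_nonzero)
qed (simp add: As_ge_0)

lemma qcomm_maps_A_le_X0:
  assumes "qcomm_one q M X0" and "x \<in> A_le j"
  shows "M *v x \<in> A_le (Suc j)"
proof (cases "j < d")
  case True
  have "eigenspace X0 (\<theta> k / (inverse q)^2) \<subseteq> ssum Vs {0..Suc j}" if "k \<in> {0..j}" for k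
  proof -
    have "\<theta> k / (inverse q)^2 = \<theta> (Suc k)" by (simp add: \<theta>_Suc field_simps)
    moreover have "Suc k \<in> {0..Suc j}" "Suc k \<le> d" using that True by auto
    ultimately show ?thesis using Vs_eq_eigenspace[of "Suc k"] ssum_base[of "Suc k" "{0..Suc j}" _ Vs] by auto
  qed
  moreover have "qcomm_one (inverse q) X0 M" using assms(1) by (simp add: qcomm_one_swap)
  ultimately show ?thesis
    using assms(2) True unfolding A_le_def
    by (intro qcomm_one_ssum_shift[OF _ q_inverse, of X0 M "{0..j}" \<theta>]) (auto simp: Vs_eq_eigenspace \<theta>_nonzero)
qed (simp add: A_le_eq_UNIV)

lemma X0_minus_A_le: "j \<le> d \<Longrightarrow> x \<in> A_le j \<Longrightarrow> X0 *v x - \<theta> j *s x \<in> ssum Vs {0..<j}"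
  unfolding A_le_def by (rule ssum_interval_diag_minus_top) (auto intro: X0_Vs)

lemma X0_minus_A_ge: "x \<in> A_ge j \<Longrightarrow> X0 *v x - \<theta> j *s x \<in> ssum Vs {j<..d}"
  unfolding A_ge_def by (rule ssum_interval_diag_minus_bottom) (auto intro: X0_Vs)

lemma X1_minus_As_le:
  "j \<le> d \<Longrightarrow> x \<in> As_le j \<Longrightarrow> X1 *v x - inverse (\<theta> j) *s x \<in> ssum Vss {0..<j}"
  unfolding As_le_def by (rule ssum_interval_diag_minus_top) (auto intro: X1_Vss)

lemma X1_minus_As_ge: "x \<in> As_ge j \<Longrightarrow> X1 *v x - inverse (\<theta> j) *s x \<in> ssum Vss {j<..d}"
  unfolding As_ge_def by (rule ssum_interval_diag_minus_bottom) (auto intro: X1_Vss)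

lemma K_minus_As_ge:
  assumes i: "i \<le> d" and x: "x \<in> As_ge (d - i)"
  shows "K *v x - \<theta> i *s x \<in> ssum Vss {d - i<..d}"
proof -
  have "x \<in> ssum EK {0..i}"
    using flag_decomposition.in_ssum_interval[OF flag_EK _ i] x A_le_eq_UNIV by simp
  then have "K *v x - \<theta> i *s x \<in> ssum EK {0..<i}"
    using i by (intro ssum_interval_diag_minus_top) (auto intro: K_EK)
  also have "ssum EK {0..<i} \<subseteq> ssum Vss {d - i<..d}"
  proof (rule ssum_least[OF ssum_subspace])
    fix k assume "k \<in> {0..<i}"
    then have "As_ge (d - k) \<subseteq> ssum Vss {d - i<..d}"
      using i unfolding As_ge_def by (intro ssum_mono) auto
    then show "EK k \<subseteq> ssum Vss {d - i<..d}" by (auto simp: EK_def)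
  qed
  finally show ?thesis .
qed

lemma Ki_minus_A_le:
  assumes i: "i \<le> d" and x: "x \<in> A_le (d - i)"
  shows "Ki *v x - inverse (\<theta> i) *s x \<in> ssum Vs {0..<d - i}"
proof -
  have "x \<in> ssum EK {i..d}"
    using flag_decomposition.in_ssum_interval[OF flag_EK i _ x] As_ge_0 by simp
  then have "Ki *v x - inverse (\<theta> i) *s x \<in> ssum EK {i<..d}"
    by (intro ssum_interval_diag_minus_bottom) (auto intro: Ki_EK)
  also have "ssum EK {i<..d} \<subseteq> ssum Vs {0..<d - i}"
  proof (rule ssum_least[OF ssum_subspace])
    fix k assume "k \<in> {i<..d}"
    then have "A_le (d - k) \<subseteq> ssum Vs {0..<d - i}"
      unfolding A_le_def by (intro ssum_mono) auto
    then show "EK k \<subseteq> ssum Vs {0..<d - i}" by (auto simp: EK_def)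
  qed
  finally show ?thesis .
qed

(* A vector in both flags bounding the neighbouring component lies in that component; the
   strict index sets make it 0 when that component does not exist (i = d, resp. i = 0). *)
lemma K_eigen_Suc:
  assumes i: "i \<le> d" and w: "w \<in> ssum Vs {0..<d - i}" "w \<in> As_ge (d - Suc i)"
  shows "K *v w = (q^2 * \<theta> i) *s w"
proof (cases "i = d")
  case False
  then have "{0..<d - i} = {0..d - Suc i}" using i by auto
  then have "w \<in> EK (Suc i)" using w by (simp add: EK_def A_le_def)
  then have "K *v w = \<theta> (Suc i) *s w" using False i by (intro K_EK) auto
  then show ?thesis by (simp add: \<theta>_Suc)
qed (use w in simp)

lemma Ki_eigen_pred:
  assumes i: "i \<le> d" and w: "w \<in> ssum Vss {d - i<..d}" "w \<in> A_le (Suc (d - i))"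
  shows "Ki *v w = (q^2 * inverse (\<theta> i)) *s w"
proof (cases i)
  case (Suc h)
  then have "{d - i<..d} = {d - h..d}" and "Suc (d - i) = d - h" using i by auto
  then have "w \<in> EK h" using w by (simp add: EK_def As_ge_def)
  then have "Ki *v w = inverse (\<theta> h) *s w" using Suc i by (intro Ki_EK) auto
  then show ?thesis using Suc q_nz \<theta>_nonzero[of h] by (simp add: \<theta>_Suc field_simps)
qed (use w in simp)

lemma Z0_eigen_pred:
  assumes i: "i \<le> d" and w: "w \<in> ssum Vss {d - i<..d}" "w \<in> A_ge (i - 1)"
  shows "Z0 *v w = (q^2 * inverse (\<theta> i)) *s w"
proof (cases i)
  case (Suc h)
  then have "{d - i<..d} = {d - h..d}" using i by auto
  then have "w \<in> EBs h" using w Suc by (simp add: EBs_def As_ge_def)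
  then have "Z0 *v w = inverse (\<theta> h) *s w" using Suc i by (intro Z0_EBs) auto
  then show ?thesis using Suc q_nz \<theta>_nonzero[of h] by (simp add: \<theta>_Suc field_simps)
qed (use w in simp)

lemma Z1_eigen_Suc:
  assumes i: "i \<le> d" and w: "w \<in> ssum Vs {0..<d - i}" "w \<in> As_le (Suc i)"
  shows "Z1 *v w = (q^2 * \<theta> i) *s w"
proof (cases "i = d")
  case False
  then have "{0..<d - i} = {0..d - Suc i}" using i by auto
  then have "w \<in> EB (Suc i)" using w by (simp add: EB_def A_le_def)
  then have "Z1 *v w = \<theta> (Suc i) *s w" using False i by (intro Z1_EB) auto
  then show ?thesis by (simp add: \<theta>_Suc)
qed (use w in simp)

lemma Z0_eigen_Suc:
  assumes i: "i \<le> d" and w: "w \<in> ssum Vs {i<..d}" "w \<in> As_ge (d - Suc i)"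
  shows "Z0 *v w = ((inverse q)^2 * inverse (\<theta> i)) *s w"
proof (cases "i = d")
  case False
  have "{i<..d} = {Suc i..d}" by auto
  then have "w \<in> EBs (Suc i)" using w by (simp add: EBs_def A_ge_def)
  then have "Z0 *v w = inverse (\<theta> (Suc i)) *s w" using False i by (intro Z0_EBs) auto
  then show ?thesis by (simp add: \<theta>_Suc power_inverse mult.commute)
qed (use w in simp)

lemma Z1_eigen_pred:
  assumes i: "i \<le> d" and w: "w \<in> ssum Vss {0..<i}" "w \<in> A_le (Suc (d - i))"
  shows "Z1 *v w = ((inverse q)^2 * \<theta> i) *s w"
proof (cases i)
  case (Suc h)
  then have "{0..<i} = {0..h}" and "Suc (d - i) = d - h" using i by auto
  then have "w \<in> EB h" using w by (simp add: EB_def As_le_def)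
  then have "Z1 *v w = \<theta> h *s w" using Suc i by (intro Z1_EB) auto
  then show ?thesis using Suc q_nz by (simp add: \<theta>_Suc field_simps)
qed (use w in simp)

lemma qcomm_X0_K: "qcomm_one q X0 K"
proof (rule qcomm_one_on_decomposition[OF dec_EK q_nz q_sq K_EK, where \<mu> = "\<lambda>i. inverse (\<theta> i)"])
  show "inverse (\<theta> i) * \<theta> i = 1" for i by (simp add: \<theta>_nonzero)
  fix i v assume i: "i \<le> d" and v: "v \<in> EK i"
  then have vA: "v \<in> A_le (d - i)" and vAs: "v \<in> As_ge (d - i)" by (auto simp: EK_def)
  define w where "w = X0 *v v - inverse (\<theta> i) *s v"
  have "w \<in> ssum Vs {0..<d - i}"
    using X0_minus_A_le[OF _ vA] \<theta>_reflect[OF i] by (simp add: w_def)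
  moreover have "w \<in> As_ge (d - Suc i)"
    using X0_maps_As_ge[OF vAs] As_ge_antimono[of "d - Suc i" "d - i"] vAs
    unfolding w_def by (intro subspace_diff_scale) (auto simp: diff_le_mono2)
  ultimately show "K *v w = (q^2 * \<theta> i) *s w" by (rule K_eigen_Suc[OF i])
qed

lemma qcomm_X1_Ki: "qcomm_one q X1 Ki"
proof (rule qcomm_one_on_decomposition[OF dec_EK q_nz q_sq Ki_EK, where \<mu> = \<theta>])
  show "\<theta> i * inverse (\<theta> i) = 1" for i by (simp add: \<theta>_nonzero)
  fix i v assume i: "i \<le> d" and v: "v \<in> EK i"
  then have vA: "v \<in> A_le (d - i)" and vAs: "v \<in> As_ge (d - i)" by (auto simp: EK_def)
  define w where "w = X1 *v v - \<theta> i *s v"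
  have "w \<in> ssum Vss {d - i<..d}"
    using X1_minus_As_ge[OF vAs] \<theta>_reflect[OF i] by (simp add: w_def)
  moreover have "w \<in> A_le (Suc (d - i))"
    using X1_maps_A_le[OF vA] A_le_mono[of "d - i" "Suc (d - i)"] vA
    unfolding w_def by (intro subspace_diff_scale) auto
  ultimately show "Ki *v w = (q^2 * inverse (\<theta> i)) *s w" by (rule Ki_eigen_pred[OF i])
qed

lemma qcomm_K_Z0: "qcomm_one q K Z0"
proof (rule qcomm_one_on_decomposition[OF dec_EBs q_nz q_sq Z0_EBs, where \<mu> = \<theta>])
  show "\<theta> i * inverse (\<theta> i) = 1" for i by (simp add: \<theta>_nonzero)
  fix i v assume i: "i \<le> d" and v: "v \<in> EBs i"
  then have vA: "v \<in> A_ge i" and vAs: "v \<in> As_ge (d - i)" by (auto simp: EBs_def)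
  define w where "w = K *v v - \<theta> i *s v"
  have "w \<in> ssum Vss {d - i<..d}"
    using K_minus_As_ge[OF i vAs] by (simp add: w_def)
  moreover have "w \<in> A_ge (i - 1)"
    using qcomm_X0_maps_A_ge[OF qcomm_X0_K vA] A_ge_antimono[of "i - 1" i] vA
    unfolding w_def by (intro subspace_diff_scale) auto
  ultimately show "Z0 *v w = (q^2 * inverse (\<theta> i)) *s w" by (rule Z0_eigen_pred[OF i])
qed

lemma qcomm_Ki_Z1: "qcomm_one q Ki Z1"
proof (rule qcomm_one_on_decomposition[OF dec_EB q_nz q_sq Z1_EB, where \<mu> = "\<lambda>i. inverse (\<theta> i)"])
  show "inverse (\<theta> i) * \<theta> i = 1" for i by (simp add: \<theta>_nonzero)
  fix i v assume i: "i \<le> d" and v: "v \<in> EB i"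
  then have vA: "v \<in> A_le (d - i)" and vAs: "v \<in> As_le i" by (auto simp: EB_def)
  define w where "w = Ki *v v - inverse (\<theta> i) *s v"
  have "w \<in> ssum Vs {0..<d - i}"
    using Ki_minus_A_le[OF i vA] by (simp add: w_def)
  moreover have "w \<in> As_le (Suc i)"
    using qcomm_X1_maps_As_le[OF qcomm_X1_Ki vAs] As_le_mono[of i "Suc i"] vAs
    unfolding w_def by (intro subspace_diff_scale) auto
  ultimately show "Z1 *v w = (q^2 * \<theta> i) *s w" by (rule Z1_eigen_Suc[OF i])
qed

lemma qcomm_Z0_X0: "qcomm_one q Z0 X0"
proof (subst qcomm_one_swap[symmetric],
    rule qcomm_one_on_decomposition[OF dec_EBs q_inverse Z0_EBs, where \<mu> = \<theta>])
  show "\<theta> i * inverse (\<theta> i) = 1" for i by (simp add: \<theta>_nonzero)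
  fix i v assume i: "i \<le> d" and v: "v \<in> EBs i"
  then have vA: "v \<in> A_ge i" and vAs: "v \<in> As_ge (d - i)" by (auto simp: EBs_def)
  define w where "w = X0 *v v - \<theta> i *s v"
  have "w \<in> ssum Vs {i<..d}"
    using X0_minus_A_ge[OF vA] by (simp add: w_def)
  moreover have "w \<in> As_ge (d - Suc i)"
    using X0_maps_As_ge[OF vAs] As_ge_antimono[of "d - Suc i" "d - i"] vAs
    unfolding w_def by (intro subspace_diff_scale) (auto simp: diff_le_mono2)
  ultimately show "Z0 *v w = ((inverse q)^2 * inverse (\<theta> i)) *s w" by (rule Z0_eigen_Suc[OF i])
qed

lemma qcomm_Z1_X1: "qcomm_one q Z1 X1"
proof (subst qcomm_one_swap[symmetric],
    rule qcomm_one_on_decomposition[OF dec_EB q_inverse Z1_EB, where \<mu> = "\<lambda>i. inverse (\<theta> i)"])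
  show "inverse (\<theta> i) * \<theta> i = 1" for i by (simp add: \<theta>_nonzero)
  fix i v assume i: "i \<le> d" and v: "v \<in> EB i"
  then have vA: "v \<in> A_le (d - i)" and vAs: "v \<in> As_le i" by (auto simp: EB_def)
  define w where "w = X1 *v v - inverse (\<theta> i) *s v"
  have "w \<in> ssum Vss {0..<i}"
    using X1_minus_As_le[OF i vAs] by (simp add: w_def)
  moreover have "w \<in> A_le (Suc (d - i))"
    using X1_maps_A_le[OF vA] A_le_mono[of "d - i" "Suc (d - i)"] vA
    unfolding w_def by (intro subspace_diff_scale) auto
  ultimately show "Z1 *v w = ((inverse q)^2 * \<theta> i) *s w" by (rule Z1_eigen_pred[OF i])
qed

lemma qcomm_X0_Z1: "qcomm_one q X0 Z1"
proof (rule qcomm_one_on_decomposition[OF dec_EB q_nz q_sq Z1_EB, where \<mu> = "\<lambda>i. inverse (\<theta> i)"])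
  show "inverse (\<theta> i) * \<theta> i = 1" for i by (simp add: \<theta>_nonzero)
  fix i v assume i: "i \<le> d" and v: "v \<in> EB i"
  then have vA: "v \<in> A_le (d - i)" and vAs: "v \<in> As_le i" by (auto simp: EB_def)
  define w where "w = X0 *v v - inverse (\<theta> i) *s v"
  have "w \<in> ssum Vs {0..<d - i}"
    using X0_minus_A_le[OF _ vA] \<theta>_reflect[OF i] by (simp add: w_def)
  moreover have "w \<in> As_le (Suc i)"
    using X0_maps_As_le[OF vAs] As_le_mono[of i "Suc i"] vAs
    unfolding w_def by (intro subspace_diff_scale) auto
  ultimately show "Z1 *v w = (q^2 * \<theta> i) *s w" by (rule Z1_eigen_Suc[OF i])
qed

lemma qcomm_X1_Z0: "qcomm_one q X1 Z0"
proof (rule qcomm_one_on_decomposition[OF dec_EBs q_nz q_sq Z0_EBs, where \<mu> = \<theta>])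
  show "\<theta> i * inverse (\<theta> i) = 1" for i by (simp add: \<theta>_nonzero)
  fix i v assume i: "i \<le> d" and v: "v \<in> EBs i"
  then have vA: "v \<in> A_ge i" and vAs: "v \<in> As_ge (d - i)" by (auto simp: EBs_def)
  define w where "w = X1 *v v - \<theta> i *s v"
  have "w \<in> ssum Vss {d - i<..d}"
    using X1_minus_As_ge[OF vAs] \<theta>_reflect[OF i] by (simp add: w_def)
  moreover have "w \<in> A_ge (i - 1)"
    using X1_maps_A_ge[OF vA] A_ge_antimono[of "i - 1" i] vA
    unfolding w_def by (intro subspace_diff_scale) auto
  ultimately show "Z0 *v w = (q^2 * inverse (\<theta> i)) *s w" by (rule Z0_eigen_pred[OF i])
qed

lemma tridiag_Z1_EBs: "tridiag_ordering Z1 EBs d"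
  unfolding tridiag_ordering_def
proof (intro allI impI image_subsetI)
  fix i v assume i: "i \<le> d" and v: "v \<in> EBs i"
  have "Z1 *v v \<in> A_ge (i - 1)"
    using qcomm_X0_maps_A_ge[OF qcomm_X0_Z1] v by (simp add: EBs_def)
  moreover have "Z1 *v v \<in> As_ge (d - i - 1)"
    using v by (intro qcomm_maps_As_ge_X1[OF qcomm_Z1_X1]) (simp add: EBs_def)
  then have "Z1 *v v \<in> As_ge (d - min (Suc i) d)"
    by (simp add: min_def As_ge_0)
  ultimately have "Z1 *v v \<in> ssum EBs {i - 1..min (Suc i) d}"
    using i by (intro flag_decomposition.in_ssum_interval[OF flag_EBs]) auto
  also have "\<dots> \<subseteq> ssum EBs ({i - 1, i, i + 1} \<inter> {0..d})"
    by (rule ssum_mono) auto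
  finally show "Z1 *v v \<in> ssum EBs ({i - 1, i, i + 1} \<inter> {0..d})" .
qed

lemma tridiag_Z0_EB: "tridiag_ordering Z0 EB d"
  unfolding tridiag_ordering_def
proof (intro allI impI image_subsetI)
  fix i v assume i: "i \<le> d" and v: "v \<in> EB i"
  have "Z0 *v v \<in> A_le (Suc (d - i))"
    using qcomm_maps_A_le_X0[OF qcomm_Z0_X0] v by (simp add: EB_def)
  then have "Z0 *v v \<in> A_le (d - (i - 1))"
    using i by (cases i) (simp_all add: A_le_eq_UNIV Suc_diff_Suc)
  moreover have "Z0 *v v \<in> As_le (Suc i)"
    using qcomm_X1_maps_As_le[OF qcomm_X1_Z0] v by (simp add: EB_def)
  then have "Z0 *v v \<in> As_le (min (Suc i) d)"
    by (cases "i < d") (simp_all add: As_le_eq_UNIV min_def)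
  ultimately have "Z0 *v v \<in> ssum EB {i - 1..min (Suc i) d}"
    using i by (intro flag_decomposition.in_ssum_interval[OF flag_EB]) auto
  also have "\<dots> \<subseteq> ssum EB ({i - 1, i, i + 1} \<inter> {0..d})"
    by (rule ssum_mono) auto
  finally show "Z0 *v v \<in> ssum EB ({i - 1, i, i + 1} \<inter> {0..d})" .
qed

lemma qint3_eq_inverse: "qint3 q = inverse (q^2) + 1 + inverse (inverse (q^2))"
  using qint3_eq[OF q_nz q_sq] by simp

lemma q_serre_X0_X1: "q_serre q X0 X1 = 0"
proof (rule q_serre_eq_0_if_tridiag[where E = Vs and \<theta> = \<theta> and r = "q^2" and d = d])
  show "ssum Vs {0..d} = UNIV" using A_le_eq_UNIV[of d] by (simp add: A_le_def)
qed (use q_nz in \<open>simp_all add: X0_Vs \<theta>_Suc qint3_eq[OF q_nz q_sq] tridiag_X1\<close>)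

lemma q_serre_X1_X0: "q_serre q X1 X0 = 0"
proof (rule q_serre_eq_0_if_tridiag[where E = Vss and \<theta> = "\<lambda>i. inverse (\<theta> i)"
      and r = "inverse (q^2)" and d = d])
  show "ssum Vss {0..d} = UNIV" using As_le_eq_UNIV[of d] by (simp add: As_le_def)
qed (use q_nz in \<open>simp_all add: X1_Vss \<theta>_Suc qint3_eq_inverse tridiag_X0\<close>)

lemma q_serre_Z0_Z1: "q_serre q Z0 Z1 = 0"
  by (rule q_serre_eq_0_if_tridiag[where E = EBs and \<theta> = "\<lambda>i. inverse (\<theta> i)"
        and r = "inverse (q^2)" and d = d])
    (use q_nz in \<open>simp_all add: decomposition_ssum_eq_UNIV[OF dec_EBs] Z0_EBs \<theta>_Suc
      qint3_eq_inverse tridiag_Z1_EBs\<close>)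

lemma q_serre_Z1_Z0: "q_serre q Z1 Z0 = 0"
  by (rule q_serre_eq_0_if_tridiag[where E = EB and \<theta> = \<theta> and r = "q^2" and d = d])
    (use q_nz in \<open>simp_all add: decomposition_ssum_eq_UNIV[OF dec_EB] Z1_EB \<theta>_Suc
      qint3_eq[OF q_nz q_sq] tridiag_Z0_EB\<close>)

lemma U_relations_generators: "U_relations q X0 X1 Z0 Z1 K Ki Ki K"
proof -
  have "K ** Ki = mat 1" and "Ki ** K = mat 1"
    by (rule matrix_inv_mult[OF K_invertible])+
  then show ?thesis
    using qcomm_X0_K qcomm_X1_Ki qcomm_K_Z0 qcomm_Ki_Z1 qcomm_Z0_X0 qcomm_Z1_X1 qcomm_X0_Z1 qcomm_X1_Z0
      q_serre_X0_X1 q_serre_X1_X0 q_serre_Z0_Z1 q_serre_Z1_Z0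
    unfolding U_relations_def Let_def qcomm_one_def q_serre_def by simp
qed

lemma U_irreducible_generators: "U_irreducible X0 X1 Z0 Z1 K Ki Ki K"
  unfolding U_irreducible_def using irreducible by simp

lemma irreducible_U_module_generators: "irreducible_U_module q X0 X1 Z0 Z1 K Ki Ki K"
  unfolding irreducible_U_module_def using U_relations_generators U_irreducible_generators by simp

end

section \<open>Rescaling\<close>

lemma eigenspace_mat_inverse_mult:
  fixes M :: "'k::field^'n^'n"
  assumes "c \<noteq> 0"
  shows "eigenspace (mat (inverse c) ** M) t = eigenspace M (c * t)"
proof -
  have "(inverse c *s (M *v v) = t *s v) \<longleftrightarrow> (M *v v = (c * t) *s v)" for v
    using assms by (auto simp: vec_eq_iff field_simps)
  then show ?thesis by (simp add: eigenspace_def mat_mult_matrix_vector_mult)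
qed

lemma tridiag_ordering_mat_mult:
  "tridiag_ordering M W d \<Longrightarrow> tridiag_ordering (mat c ** M) W d"
  unfolding tridiag_ordering_def
  by (auto simp: mat_mult_matrix_vector_mult intro: vec.subspace_scale[OF ssum_subspace])

lemma invariant_if_mat_inverse_mult_invariant:
  fixes M :: "'k::field^'n^'n"
  assumes "c \<noteq> 0" and "vec.subspace U" and "(\<lambda>v. (mat (inverse c) ** M) *v v) ` U \<subseteq> U"
  shows "(\<lambda>v. M *v v) ` U \<subseteq> U"
proof -
  have "M *v v = c *s ((mat (inverse c) ** M) *v v)" for v
    using assms(1) by (simp add: mat_mult_matrix_vector_mult vector_smult_assoc)
  then show ?thesis using assms(2,3) by (auto intro: vec.subspace_scale)
qed

lemma mat_inverse_mult_eigenvector: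
  fixes M :: "'k::field^'n^'n"
  assumes "c \<noteq> 0" and "M *v v = (c * t) *s v"
  shows "(mat (inverse c) ** M) *v v = t *s v"
  using assms by (simp add: mat_mult_matrix_vector_mult vector_smult_assoc)

theorem theorem13p2:
  fixes q a as b bs :: "'k::alg_closed_field"
    and A As B Bs Ks :: "'k^'n^'n"
    and Vs Vss :: "nat \<Rightarrow> ('k^'n) set"
    and d :: nat
  assumes q_nz: "q \<noteq> 0"
    and q_not_root: "\<forall>m::nat. m > 0 \<longrightarrow> q ^ m \<noteq> 1"
    and nz: "a \<noteq> 0" "as \<noteq> 0" "b \<noteq> 0" "bs \<noteq> 0"
    and TD: "tridiagonal_pair A As"
    and Vord: "eigenspace_ordering A Vs d" "tridiag_ordering As Vs d"
    and Vsord: "eigenspace_ordering As Vss d" "tridiag_ordering A Vss d"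
    and evA: "\<forall>i\<le>d. Vs i = eigenspace A (a * q powi (2 * int i - int d))"
    and evAs: "\<forall>i\<le>d. Vss i = eigenspace As (as * q powi (int d - 2 * int i))"
    and dec1: "decomposition (\<lambda>i. ssum Vss {0..i} \<inter> ssum Vs {0..d - i}) d"
    and dec2: "decomposition (\<lambda>i. ssum Vss {d - i..d} \<inter> ssum Vs {i..d}) d"
    and dec3: "decomposition (\<lambda>i. ssum Vss {d - i..d} \<inter> ssum Vs {0..d - i}) d"
    and B_def: "\<forall>i\<le>d. \<forall>v \<in> ssum Vss {0..i} \<inter> ssum Vs {0..d - i}.
                  B *v v = (b * q powi (2 * int i - int d)) *s v"
    and Bs_def: "\<forall>i\<le>d. \<forall>v \<in> ssum Vss {d - i..d} \<inter> ssum Vs {i..d}.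
                  Bs *v v = (bs * q powi (int d - 2 * int i)) *s v"
    and Ks_def: "\<forall>i\<le>d. \<forall>v \<in> ssum Vss {d - i..d} \<inter> ssum Vs {0..d - i}.
                  Ks *v v = (q powi (2 * int i - int d)) *s v"
  shows "irreducible_U_module q
           (mat (inverse a) ** A) (mat (inverse as) ** As)
           (mat (inverse bs) ** Bs) (mat (inverse b) ** B)
           Ks (matrix_inv Ks) (matrix_inv Ks) Ks"
proof -
  interpret tdp_generators q "mat (inverse a) ** A" "mat (inverse as) ** As"
    "mat (inverse bs) ** Bs" "mat (inverse b) ** B" Ks Vs Vss d
  proof
    show "q^2 \<noteq> 1" using q_not_root by (metis zero_less_numeral)
    fix U :: "('k^'n) set"
    assume "vec.subspace U" "(\<lambda>v. (mat (inverse a) ** A) *v v) ` U \<subseteq> U"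
      "(\<lambda>v. (mat (inverse as) ** As) *v v) ` U \<subseteq> U"
    then show "U = {0} \<or> U = UNIV"
      using TD nz(1,2) invariant_if_mat_inverse_mult_invariant unfolding tridiagonal_pair_def by blast
  qed (use q_nz evA evAs nz Vord(2) Vsord(2) dec1 dec2 dec3 B_def Bs_def Ks_def in
    \<open>simp_all add: eigenspace_mat_inverse_mult tridiag_ordering_mat_mult mat_inverse_mult_eigenvector\<close>)
  show ?thesis by (rule irreducible_U_module_generators)
qed

end
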